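(* Let $G$ be a graph, $t\in\mathbb{N}$, and let $x,y\in V(G)$ be distinct non-adjacent vertices such that $G$ contains $t+3$ pairwise internally vertex-disjoint paths between $x$ and $y$. Then $(G,t)$ has a solution if and only if $(G+xy,t)$ has a solution, where $G+xy$ is $G$ with the edge $xy$ added.
   Context: A solution for $(G,t)$ is a set $S\subseteq V(G)$ with $|S|\le t$ and $\mathrm{tw}(G-S)\le 2$, where $\mathrm{tw}$ is treewidth. *)

theory Defs
  imports Main
begin

definition sgraph :: "'a set \<Rightarrow> 'a set set \<Rightarrow> bool" where
  "sgraph V E \<longleftrightarrow> finite V \<and> (\<forall>e\<in>E. e \<subseteq> V \<and> card e = 2)"

definition is_walk :: "'a set set \<Rightarrow> 'a list \<Rightarrow> bool" where
  "is_walk E xs \<longleftrightarrow> xs \<noteq> [] \<and> (\<forall>i. Suc i < length xs \<longrightarrow> {xs ! i, xs ! Suc i} \<in> E)"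

definition is_path :: "'a set \<Rightarrow> 'a set set \<Rightarrow> 'a \<Rightarrow> 'a \<Rightarrow> 'a list \<Rightarrow> bool" where
  "is_path V E u v xs \<longleftrightarrow> is_walk E xs \<and> distinct xs \<and> set xs \<subseteq> V \<and> hd xs = u \<and> last xs = v"

definition connected_set :: "'a set set \<Rightarrow> 'a set \<Rightarrow> bool" where
  "connected_set E S \<longleftrightarrow> (\<forall>u\<in>S. \<forall>v\<in>S. \<exists>xs. is_walk E xs \<and> set xs \<subseteq> S \<and> hd xs = u \<and> last xs = v)"

definition is_tree :: "'b set \<Rightarrow> 'b set set \<Rightarrow> bool" where
  "is_tree I F \<longleftrightarrow> sgraph I F \<and> I \<noteq> {} \<and> connected_set F I \<and> card F + 1 = card I"

definition tree_decomposition ::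
  "'a set \<Rightarrow> 'a set set \<Rightarrow> 'b set \<Rightarrow> 'b set set \<Rightarrow> ('b \<Rightarrow> 'a set) \<Rightarrow> bool" where
  "tree_decomposition V E I F B \<longleftrightarrow>
     is_tree I F \<and>
     (\<forall>i\<in>I. B i \<subseteq> V) \<and>
     (\<forall>v\<in>V. \<exists>i\<in>I. v \<in> B i) \<and>
     (\<forall>e\<in>E. \<exists>i\<in>I. e \<subseteq> B i) \<and>
     (\<forall>v\<in>V. connected_set F {i\<in>I. v \<in> B i})"

definition treewidth_le :: "'a set \<Rightarrow> 'a set set \<Rightarrow> nat \<Rightarrow> bool" where
  "treewidth_le V E k \<longleftrightarrow>
     (\<exists>(I::nat set) F B. tree_decomposition V E I F B \<and> (\<forall>i\<in>I. card (B i) \<le> k + 1))"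

definition del_verts_E :: "'a set set \<Rightarrow> 'a set \<Rightarrow> 'a set set" where
  "del_verts_E E S = {e\<in>E. e \<inter> S = {}}"

definition is_solution :: "'a set \<Rightarrow> 'a set set \<Rightarrow> nat \<Rightarrow> 'a set \<Rightarrow> bool" where
  "is_solution V E t S \<longleftrightarrow> S \<subseteq> V \<and> card S \<le> t \<and> treewidth_le (V - S) (del_verts_E E S) 2"

definition has_solution :: "'a set \<Rightarrow> 'a set set \<Rightarrow> nat \<Rightarrow> bool" where
  "has_solution V E t \<longleftrightarrow> (\<exists>S. is_solution V E t S)"

end

theory Submission
  imports Defs
begin

text \<open>
  Take a solution S of G and a tree decomposition of G - S of width at most 2.
  The paths are disjoint apart from their ends, so at most |S| \<le> t of them meet S,
  and if x or y lies in S the edge xy disappears anyway; otherwise three of the paths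
  survive in G - S. Suppose no bag contained both x and y. The nodes whose bags
  contain x form a subtree, and so do those for y; the tree edge ij by which a tree
  path leaves the x-subtree for good separates the two subtrees, so every x-y path in
  G - S passes through the adhesion B_i \<inter> B_j, which misses x and y. The three
  surviving paths give three distinct inner vertices in B_i, which together with x
  exceed the width bound. So some bag contains x and y, and the same decomposition
  covers G + xy. The converse holds because deleting an edge keeps a decomposition.
\<close>

lemma is_walk_iff_successively:
  "is_walk E xs \<longleftrightarrow> xs \<noteq> [] \<and> successively (\<lambda>u v. {u, v} \<in> E) xs"
  by (simp add: is_walk_def successively_conv_nth)

lemma is_walk_crossing_edge:
  assumes "is_walk E xs" "hd xs \<notin> C" "last xs \<in> C"
  obtains u v where "{u, v} \<in> E" "u \<in> set xs" "v \<in> set xs" "u \<notin> C" "v \<in> C"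
proof -
  have "xs \<noteq> []" using assms(1) by (simp add: is_walk_def)
  then obtain ys v zs where xs: "xs = ys @ v # zs" "v \<in> C" "\<forall>u\<in>set ys. u \<notin> C"
    using split_list_first_prop[of xs "\<lambda>v. v \<in> C"] assms(3) last_in_set by blast
  have "ys \<noteq> []" using xs assms(2) by auto
  moreover have "{last ys, v} \<in> E"
    using assms(1) xs \<open>ys \<noteq> []\<close> by (simp add: is_walk_iff_successively successively_append_iff)
  ultimately show thesis using that xs by simp
qed

inductive_set reachable :: "'b set set \<Rightarrow> 'b set \<Rightarrow> 'b set" for F :: "'b set set" and R :: "'b set"
where
  base: "r \<in> R \<Longrightarrow> r \<in> reachable F R"
| step: "u \<in> reachable F R \<Longrightarrow> {u, w} \<in> F \<Longrightarrow> w \<in> reachable F R"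

lemma reachable_mono:
  assumes "F \<subseteq> F'" "R \<subseteq> R'"
  shows "reachable F R \<subseteq> reachable F' R'"
proof
  fix v assume "v \<in> reachable F R"
  then show "v \<in> reachable F' R'"
    by induction (use assms in \<open>auto intro: reachable.intros\<close>)
qed

lemma reachable_subset: "reachable F R \<subseteq> R \<union> \<Union>F"
proof
  fix v assume "v \<in> reachable F R"
  then show "v \<in> R \<union> \<Union>F" by induction auto
qed

lemma is_walk_subset_reachable:
  assumes "is_walk F xs" "hd xs \<in> reachable F R"
  shows "set xs \<subseteq> reachable F R"
proof -
  have "successively (\<lambda>u v. {u, v} \<in> F) xs" "xs \<noteq> []"
    using assms(1) by (simp_all add: is_walk_iff_successively)
  then show ?thesis using assms(2)
  proof (induction xs)
    case (Cons a xs)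
    show ?case
    proof (cases "xs = []")
      case False
      then have "{a, hd xs} \<in> F" "successively (\<lambda>u v. {u, v} \<in> F) xs"
        using Cons.prems(1) by (simp_all add: successively_Cons)
      moreover have "hd xs \<in> reachable F R"
        using Cons.prems(3) \<open>{a, hd xs} \<in> F\<close> by (auto intro: reachable.step)
      ultimately have "set xs \<subseteq> reachable F R" using Cons.IH False by blast
      then show ?thesis using Cons.prems(3) by simp
    qed (use Cons.prems in simp)
  qed simp
qed

lemma reachable_insert_edge_subset:
  assumes "d \<in> reachable F (insert c R)"
  shows "reachable (insert {c, d} F) R \<subseteq> reachable F (insert c R)"
proof
  fix v assume "v \<in> reachable (insert {c, d} F) R"
  then show "v \<in> reachable F (insert c R)"
  proof induction
    case (step u w)
    then show ?case
      using assms by (cases "{u, w} = {c, d}") (auto simp: doubleton_eq_iff intro: reachable.intros)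
  qed (auto intro: reachable.base)
qed

lemma reachable_insert_edge_away:
  assumes "a \<notin> reachable F R" "b \<notin> reachable F R"
  shows "reachable (insert {a, b} F) R \<subseteq> reachable F R"
proof
  fix v assume "v \<in> reachable (insert {a, b} F) R"
  then show "v \<in> reachable F R"
  proof induction
    case (step u w)
    then show ?case
      using assms by (cases "{u, w} = {a, b}") (auto simp: doubleton_eq_iff intro: reachable.intros)
  qed (auto intro: reachable.base)
qed

lemma reachable_insert_edge_extra_root:
  obtains c where "reachable (insert {a, b} F) R \<subseteq> reachable F (insert c R)"
proof -
  consider "b \<in> reachable F R" | "a \<in> reachable F R" | "a \<notin> reachable F R" "b \<notin> reachable F R"
    by blast
  then show thesis
  proof cases
    case 1
    then have "b \<in> reachable F (insert a R)" using reachable_mono[of F F R "insert a R"] by blast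
    then show thesis by (rule that[OF reachable_insert_edge_subset])
  next
    case 2
    then have "a \<in> reachable F (insert b R)" using reachable_mono[of F F R "insert b R"] by blast
    then have "reachable (insert {b, a} F) R \<subseteq> reachable F (insert b R)"
      by (rule reachable_insert_edge_subset)
    then show thesis using that insert_commute[of b a "{}"] by simp
  next
    case 3
    then have "reachable (insert {a, b} F) R \<subseteq> reachable F R" by (rule reachable_insert_edge_away)
    also have "\<dots> \<subseteq> reachable F (insert a R)" by (rule reachable_mono) auto
    finally show thesis by (rule that)
  qed
qed

lemma finite_reachable:
  assumes "finite F" "\<forall>e\<in>F. finite e" "finite R"
  shows "finite (reachable F R)"
proof (rule finite_subset[OF reachable_subset])
  show "finite (R \<union> \<Union>F)" using assms by simp
qed

text \<open>A connected graph on $n$ vertices has at least $n - 1$ edges.\<close>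

lemma card_reachable_le:
  assumes "finite F" "\<forall>e\<in>F. \<exists>a b. e = {a, b}" "finite R"
  shows "card (reachable F R) \<le> card F + card R"
  using assms
proof (induction F arbitrary: R rule: finite_induct)
  case empty
  have "reachable {} R = R" using reachable_subset[of "{}" R] by (auto intro: reachable.base)
  then show ?case by simp
next
  case (insert e F)
  obtain a b where e: "e = {a, b}" using insert.prems(1) by auto
  obtain c where sub: "reachable (insert e F) R \<subseteq> reachable F (insert c R)"
    unfolding e by (rule reachable_insert_edge_extra_root)
  have "\<forall>e\<in>F. finite e" using insert.prems(1) by auto
  then have "finite (reachable F (insert c R))"
    using insert.hyps(1) insert.prems(2) by (simp add: finite_reachable)
  then have "card (reachable (insert e F) R) \<le> card (reachable F (insert c R))"
    using sub by (rule card_mono)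
  also have "\<dots> \<le> card F + card (insert c R)" using insert.IH[of "insert c R"] insert.prems by simp
  also have "\<dots> \<le> card (insert e F) + card R"
    using insert.hyps(1,2) insert.prems(2) by (simp add: card_insert_if)
  finally show ?case .
qed

text \<open>Otherwise the tree without the edge ij would still be connected, with one edge too few.\<close>

lemma tree_edge_cut:
  assumes "is_tree I F" "{i, j} \<in> F"
  shows "i \<notin> reachable (F - {{i, j}}) {j}"
proof
  let ?F' = "F - {{i, j}}"
  assume "i \<in> reachable ?F' {j}"
  then have "reachable (insert {j, i} ?F') {j} \<subseteq> reachable ?F' {j}"
    using reachable_insert_edge_subset[of i ?F' j "{j}"] by simp
  moreover have "insert {j, i} ?F' = F" using assms(2) by (auto simp: insert_commute)
  ultimately have reach: "reachable F {j} \<subseteq> reachable ?F' {j}" by simp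
  have sg: "sgraph I F" and con: "connected_set F I" and count: "card F + 1 = card I"
    using assms(1) by (auto simp: is_tree_def)
  have "j \<in> I" using sg assms(2) by (auto simp: sgraph_def)
  have "I \<subseteq> reachable F {j}"
  proof
    fix v assume "v \<in> I"
    then obtain xs where "is_walk F xs" "hd xs = j" "last xs = v"
      using con \<open>j \<in> I\<close> unfolding connected_set_def by blast
    then show "v \<in> reachable F {j}"
      using is_walk_subset_reachable[of F xs "{j}"] last_in_set[of xs]
      by (auto simp: is_walk_def intro: reachable.base)
  qed
  have finI: "finite I" using sg by (simp add: sgraph_def)
  have finF: "finite F" using sg finI by (intro finite_subset[of F "Pow I"]) (auto simp: sgraph_def)
  have "\<forall>e\<in>?F'. \<exists>a b. e = {a, b}" using sg unfolding sgraph_def by (metis DiffD1 card_2_iff)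
  moreover have "\<forall>e\<in>?F'. finite e" using sg by (auto simp: sgraph_def intro: card_ge_0_finite)
  ultimately have "card (reachable ?F' {j}) \<le> card ?F' + 1"
    using card_reachable_le[of ?F' "{j}"] finF by simp
  moreover have "card I \<le> card (reachable ?F' {j})"
  proof (rule card_mono)
    show "finite (reachable ?F' {j})"
      using \<open>\<forall>e\<in>?F'. finite e\<close> finF by (simp add: finite_reachable)
    show "I \<subseteq> reachable ?F' {j}" using \<open>I \<subseteq> _\<close> reach by blast
  qed
  ultimately have "card I \<le> card ?F' + 1" by simp
  also have "\<dots> = card F" using finF assms(2) card_gt_0_iff[of F] by (auto simp: card_Diff_singleton)
  finally show False using count by simp
qed

lemma connected_set_contains_cut_edge:
  assumes "connected_set F T" "u \<in> T" "u \<notin> reachable (F - {{i, j}}) {j}"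
    "w \<in> T" "w \<in> reachable (F - {{i, j}}) {j}"
  shows "i \<in> T \<and> j \<in> T"
proof -
  let ?C = "reachable (F - {{i, j}}) {j}"
  obtain xs where xs: "is_walk F xs" "set xs \<subseteq> T" "hd xs = u" "last xs = w"
    using assms(1,2,4) unfolding connected_set_def by blast
  obtain a b where ab: "{a, b} \<in> F" "a \<in> set xs" "b \<in> set xs" "a \<notin> ?C" "b \<in> ?C"
    by (rule is_walk_crossing_edge[OF xs(1)]) (use xs(3,4) assms(3,5) in simp_all)
  have eq: "{a, b} = {i, j}"
  proof (rule ccontr)
    assume "{a, b} \<noteq> {i, j}"
    then have "{b, a} \<in> F - {{i, j}}" using ab(1) insert_commute[of b a "{}"] by simp
    then have "a \<in> ?C" using ab(5) by (rule reachable.step[rotated])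
    then show False using ab(4) by contradiction
  qed
  have "i \<in> {a, b}" "j \<in> {a, b}" unfolding eq by simp_all
  then show ?thesis using ab(2,3) xs(2) by blast
qed

lemma is_walk_last_exit:
  assumes "is_walk F ws" "hd ws \<in> T" "last ws \<notin> T"
  obtains i j where "{i, j} \<in> F" "i \<in> T" "j \<notin> T" "last ws \<in> reachable (F - {{i, j}}) {j}"
proof -
  have "ws \<noteq> []" using assms(1) by (simp add: is_walk_def)
  then have "\<exists>l\<in>set ws. l \<in> T" using assms(2) hd_in_set by blast
  from split_list_last_prop[OF this]
  obtain ys i zs where split: "ws = ys @ i # zs" "i \<in> T" "\<forall>z\<in>set zs. z \<notin> T"
    by blast
  have "zs \<noteq> []" using split assms(3) by auto
  define j where "j = hd zs"
  have walk: "successively (\<lambda>u v. {u, v} \<in> F) (i # zs)"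
    using assms(1) split(1) by (simp add: is_walk_iff_successively successively_append_iff)
  then have ij: "{i, j} \<in> F" using \<open>zs \<noteq> []\<close> by (simp add: successively_Cons j_def)
  have "i \<notin> set zs" using split(2,3) by blast
  have "successively (\<lambda>u v. {u, v} \<in> F - {{i, j}}) zs"
  proof (rule successively_mono)
    show "successively (\<lambda>u v. {u, v} \<in> F) zs" using walk by (auto simp: successively_Cons)
    fix u v assume "u \<in> set zs" "v \<in> set zs" "{u, v} \<in> F"
    then show "{u, v} \<in> F - {{i, j}}" using \<open>i \<notin> set zs\<close> by (auto simp: doubleton_eq_iff)
  qed
  then have "set zs \<subseteq> reachable (F - {{i, j}}) {j}"
    using \<open>zs \<noteq> []\<close> is_walk_subset_reachable[of "F - {{i, j}}" zs "{j}"]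
    by (simp add: is_walk_iff_successively j_def reachable.base)
  then have "last ws \<in> reachable (F - {{i, j}}) {j}" using split(1) \<open>zs \<noteq> []\<close> by auto
  moreover have "j \<notin> T" using split(3) \<open>zs \<noteq> []\<close> by (simp add: j_def)
  ultimately show thesis using that ij split(2) by blast
qed

text \<open>
  The first edge of p reaching a vertex with a bag beyond the cut lies in a bag on the near
  side, so the nodes of that vertex, a connected set, contain both ends of the cut edge.
\<close>

lemma tree_decomposition_walk_meets_adhesion:
  assumes td: "tree_decomposition V E I F B"
    and p: "is_walk E p" "set p \<subseteq> V"
    and start: "{l\<in>I. hd p \<in> B l} \<inter> reachable (F - {{i, j}}) {j} = {}"
    and stop: "{l\<in>I. last p \<in> B l} \<inter> reachable (F - {{i, j}}) {j} \<noteq> {}"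
  shows "\<exists>z\<in>set p. z \<in> B i \<and> z \<in> B j"
proof -
  let ?C = "reachable (F - {{i, j}}) {j}"
  let ?D = "{v. {l\<in>I. v \<in> B l} \<inter> ?C \<noteq> {}}"
  obtain u v where uv: "{u, v} \<in> E" "u \<in> set p" "v \<in> set p" "u \<notin> ?D" "v \<in> ?D"
    using is_walk_crossing_edge[of E p ?D] p(1) start stop by auto
  obtain l where l: "l \<in> I" "{u, v} \<subseteq> B l"
    using td uv(1) unfolding tree_decomposition_def by blast
  obtain l' where l': "l' \<in> I" "v \<in> B l'" "l' \<in> ?C" using uv(5) by blast
  have "connected_set F {l\<in>I. v \<in> B l}"
    using td uv(3) p(2) unfolding tree_decomposition_def by blast
  then have "i \<in> {l\<in>I. v \<in> B l} \<and> j \<in> {l\<in>I. v \<in> B l}"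
    using connected_set_contains_cut_edge[of F _ l i j l'] l l' uv(4) by auto
  then show ?thesis using uv(3) by blast
qed

lemma tree_decomposition_separating_edge:
  assumes td: "tree_decomposition V E I F B" and "x \<in> V" "y \<in> V"
    and apart: "\<forall>l\<in>I. \<not> (x \<in> B l \<and> y \<in> B l)"
  obtains i j where "{i, j} \<in> F" "i \<in> I" "x \<in> B i" "x \<notin> B j"
    "{l\<in>I. x \<in> B l} \<inter> reachable (F - {{i, j}}) {j} = {}"
    "{l\<in>I. y \<in> B l} \<inter> reachable (F - {{i, j}}) {j} \<noteq> {}"
proof -
  define Tx where "Tx = {l\<in>I. x \<in> B l}"
  define Ty where "Ty = {l\<in>I. y \<in> B l}"
  have tree: "is_tree I F" and sg: "sgraph I F" and con: "connected_set F I"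
    using td unfolding tree_decomposition_def is_tree_def by auto
  have "\<forall>v\<in>V. \<exists>l\<in>I. v \<in> B l" using td by (simp add: tree_decomposition_def)
  then obtain p q where "p \<in> Tx" "q \<in> Ty" using assms(2,3) unfolding Tx_def Ty_def by blast
  then obtain ws where ws: "is_walk F ws" "hd ws = p" "last ws = q"
    using con unfolding connected_set_def Tx_def Ty_def by blast
  have "q \<notin> Tx" using \<open>q \<in> Ty\<close> apart by (auto simp: Tx_def Ty_def)
  obtain i j where ij: "{i, j} \<in> F" "i \<in> Tx" "j \<notin> Tx"
    and "last ws \<in> reachable (F - {{i, j}}) {j}"
    by (rule is_walk_last_exit[OF ws(1)]) (use ws(2,3) \<open>p \<in> Tx\<close> \<open>q \<notin> Tx\<close> in simp_all)
  then have y_side: "q \<in> Ty \<inter> reachable (F - {{i, j}}) {j}" using ws(3) \<open>q \<in> Ty\<close> by simp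
  have x_side: "Tx \<inter> reachable (F - {{i, j}}) {j} = {}"
  proof (rule ccontr)
    assume "Tx \<inter> reachable (F - {{i, j}}) {j} \<noteq> {}"
    moreover have "connected_set F Tx" using td assms(2) unfolding tree_decomposition_def Tx_def by blast
    ultimately have "j \<in> Tx"
      using connected_set_contains_cut_edge[of F Tx i i j] tree_edge_cut[OF tree ij(1)] ij(2) by blast
    then show False using ij(3) by simp
  qed
  have "j \<in> I" using sg ij(1) by (auto simp: sgraph_def)
  show thesis
  proof (rule that[OF ij(1)])
    show "i \<in> I" "x \<in> B i" using ij(2) by (simp_all add: Tx_def)
    show "x \<notin> B j" using ij(3) \<open>j \<in> I\<close> by (simp add: Tx_def)
    show "{l\<in>I. x \<in> B l} \<inter> reachable (F - {{i, j}}) {j} = {}" using x_side by (simp add: Tx_def)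
    show "{l\<in>I. y \<in> B l} \<inter> reachable (F - {{i, j}}) {j} \<noteq> {}" using y_side by (auto simp: Ty_def)
  qed
qed

lemma tree_decomposition_bag_contains_ends:
  assumes td: "tree_decomposition V E I F B" and "finite V"
    and width: "\<forall>l\<in>I. card (B l) \<le> k + 1"
    and paths: "\<forall>r\<in>A. is_path V E x y (P r)"
    and disjoint: "\<forall>r\<in>A. \<forall>s\<in>A. r \<noteq> s \<longrightarrow> set (P r) \<inter> set (P s) = {x, y}"
    and many: "k + 1 \<le> card A"
  shows "\<exists>l\<in>I. x \<in> B l \<and> y \<in> B l"
proof (rule ccontr)
  assume "\<not> ?thesis"
  then have apart: "\<forall>l\<in>I. \<not> (x \<in> B l \<and> y \<in> B l)" by simp
  have "card A \<noteq> 0" using many by simp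
  then have "finite A" "A \<noteq> {}" by (simp_all add: card_eq_0_iff)
  then obtain r where "r \<in> A" by blast
  then have "P r \<noteq> []" "hd (P r) = x" "last (P r) = y" "set (P r) \<subseteq> V"
    using paths by (auto simp: is_path_def is_walk_def)
  then have "x \<in> V" "y \<in> V" using hd_in_set last_in_set by blast+
  obtain i j where "{i, j} \<in> F" "i \<in> I" "x \<in> B i" "x \<notin> B j"
    and x_side: "{l\<in>I. x \<in> B l} \<inter> reachable (F - {{i, j}}) {j} = {}"
    and y_side: "{l\<in>I. y \<in> B l} \<inter> reachable (F - {{i, j}}) {j} \<noteq> {}"
    by (rule tree_decomposition_separating_edge[OF td \<open>x \<in> V\<close> \<open>y \<in> V\<close> apart])
  have "y \<notin> B i" using apart \<open>i \<in> I\<close> \<open>x \<in> B i\<close> by blast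
  have "\<forall>r\<in>A. \<exists>z. z \<in> set (P r) \<and> z \<in> B i \<and> z \<in> B j"
  proof
    fix r assume "r \<in> A"
    then have "is_walk E (P r)" "set (P r) \<subseteq> V" "hd (P r) = x" "last (P r) = y"
      using paths by (auto simp: is_path_def)
    then show "\<exists>z. z \<in> set (P r) \<and> z \<in> B i \<and> z \<in> B j"
      using tree_decomposition_walk_meets_adhesion[OF td, of "P r" i j] x_side y_side by auto
  qed
  then obtain z where z: "\<forall>r\<in>A. z r \<in> set (P r) \<and> z r \<in> B i \<and> z r \<in> B j"
    by (rule bchoice[THEN exE])
  have inner: "z r \<notin> {x, y}" if "r \<in> A" for r
    using z that \<open>x \<notin> B j\<close> \<open>y \<notin> B i\<close> by auto
  have "inj_on z A"
  proof (rule inj_onI, rule ccontr)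
    fix r s assume "r \<in> A" "s \<in> A" "z r = z s" "r \<noteq> s"
    then have "z r \<in> set (P r) \<inter> set (P s)" using z by auto
    then have "z r \<in> {x, y}" using disjoint \<open>r \<in> A\<close> \<open>s \<in> A\<close> \<open>r \<noteq> s\<close> by auto
    then show False using inner \<open>r \<in> A\<close> by blast
  qed
  moreover have "x \<notin> z ` A" using inner by blast
  ultimately have "card A + 1 = card (insert x (z ` A))"
    using \<open>finite A\<close> by (simp add: card_image)
  also have "\<dots> \<le> card (B i)"
  proof (rule card_mono)
    have "B i \<subseteq> V" using td \<open>i \<in> I\<close> by (simp add: tree_decomposition_def)
    then show "finite (B i)" using \<open>finite V\<close> by (rule finite_subset)
    show "insert x (z ` A) \<subseteq> B i" using z \<open>x \<in> B i\<close> by auto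
  qed
  finally show False using width \<open>i \<in> I\<close> many by fastforce
qed

lemma card_le_card_avoiding_plus:
  assumes "finite R" "finite S" "S \<inter> D = {}"
    and overlap: "\<forall>r\<in>R. \<forall>s\<in>R. r \<noteq> s \<longrightarrow> X r \<inter> X s \<subseteq> D"
  shows "card R \<le> card {r\<in>R. X r \<inter> S = {}} + card S"
proof -
  let ?H = "{r\<in>R. X r \<inter> S \<noteq> {}}"
  have "\<forall>r\<in>?H. \<exists>s. s \<in> X r \<inter> S" by blast
  then obtain f where f: "\<forall>r\<in>?H. f r \<in> X r \<inter> S" by (rule bchoice[THEN exE])
  have "inj_on f ?H"
  proof (rule inj_onI, rule ccontr)
    fix r s assume "r \<in> ?H" "s \<in> ?H" "f r = f s" "r \<noteq> s"
    then have "f r \<in> X r \<inter> X s" using f by auto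
    moreover have "X r \<inter> X s \<subseteq> D" using overlap \<open>r \<in> ?H\<close> \<open>s \<in> ?H\<close> \<open>r \<noteq> s\<close> by simp
    ultimately have "f r \<in> D" by blast
    then show False using f \<open>r \<in> ?H\<close> assms(3) by blast
  qed
  moreover have "f ` ?H \<subseteq> S" using f by blast
  ultimately have "card ?H \<le> card S" using assms(2) by (rule card_inj_on_le)
  moreover have "card R = card {r\<in>R. X r \<inter> S = {}} + card ?H"
  proof -
    have "card ({r\<in>R. X r \<inter> S = {}} \<union> ?H) = card {r\<in>R. X r \<inter> S = {}} + card ?H"
      using assms(1) by (intro card_Un_disjoint) auto
    moreover have "{r\<in>R. X r \<inter> S = {}} \<union> ?H = R" by blast
    ultimately show ?thesis by simp
  qed
  ultimately show ?thesis by simp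
qed

lemma is_path_del_verts_E:
  assumes "is_path V E u v p" "set p \<inter> S = {}"
  shows "is_path (V - S) (del_verts_E E S) u v p"
proof -
  have "{p ! i, p ! Suc i} \<inter> S = {}" if "Suc i < length p" for i
  proof -
    have "p ! i \<in> set p" "p ! Suc i \<in> set p" using that by (simp_all add: nth_mem)
    then show ?thesis using assms(2) by blast
  qed
  moreover have "is_walk E p" "distinct p" "set p \<subseteq> V" "hd p = u" "last p = v"
    using assms(1) by (simp_all add: is_path_def)
  ultimately show ?thesis
    using assms(2) by (auto simp: is_path_def is_walk_def del_verts_E_def)
qed

lemma tree_decomposition_edge_subset:
  "tree_decomposition V E I F B \<Longrightarrow> E' \<subseteq> E \<Longrightarrow> tree_decomposition V E' I F B"
  unfolding tree_decomposition_def by blast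

lemma tree_decomposition_insert_edge:
  "tree_decomposition V E I F B \<Longrightarrow> l \<in> I \<Longrightarrow> e \<subseteq> B l \<Longrightarrow> tree_decomposition V (insert e E) I F B"
  unfolding tree_decomposition_def by blast

lemma treewidth_le_edge_subset:
  assumes "treewidth_le V E k" "E' \<subseteq> E"
  shows "treewidth_le V E' k"
proof -
  obtain I :: "nat set" and F B where "tree_decomposition V E I F B" "\<forall>l\<in>I. card (B l) \<le> k + 1"
    using assms(1) unfolding treewidth_le_def by blast
  then show ?thesis
    unfolding treewidth_le_def using tree_decomposition_edge_subset[OF _ assms(2)] by blast
qed

lemma treewidth_le_insert_edge:
  assumes "treewidth_le V E k" "finite V"
    and "\<forall>r\<in>A. is_path V E x y (P r)"
    and "\<forall>r\<in>A. \<forall>s\<in>A. r \<noteq> s \<longrightarrow> set (P r) \<inter> set (P s) = {x, y}"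
    and "k + 1 \<le> card A"
  shows "treewidth_le V (insert {x, y} E) k"
proof -
  obtain I :: "nat set" and F B where td: "tree_decomposition V E I F B"
    and width: "\<forall>l\<in>I. card (B l) \<le> k + 1"
    using assms(1) unfolding treewidth_le_def by blast
  then obtain l where "l \<in> I" "{x, y} \<subseteq> B l"
    using tree_decomposition_bag_contains_ends[OF td assms(2) width assms(3-5)] by blast
  then have "tree_decomposition V (insert {x, y} E) I F B" by (rule tree_decomposition_insert_edge[OF td])
  then show ?thesis using width unfolding treewidth_le_def by blast
qed

lemma has_solution_edge_subset:
  assumes "has_solution V E t" "E' \<subseteq> E"
  shows "has_solution V E' t"
proof -
  obtain S where S: "is_solution V E t S" using assms(1) by (auto simp: has_solution_def)
  have "del_verts_E E' S \<subseteq> del_verts_E E S" using assms(2) by (auto simp: del_verts_E_def)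
  then have "is_solution V E' t S"
    using S treewidth_le_edge_subset by (auto simp: is_solution_def)
  then show ?thesis by (auto simp: has_solution_def)
qed

theorem mainTheorem6:
  fixes V :: "'a set" and E :: "'a set set" and t :: nat and x y :: 'a
    and P :: "nat \<Rightarrow> 'a list"
  assumes "sgraph V E"
    and "x \<in> V" "y \<in> V" "x \<noteq> y" "{x, y} \<notin> E"
    and "\<forall>i < t + 3. is_path V E x y (P i)"
    and "\<forall>i < t + 3. \<forall>j < t + 3. i \<noteq> j \<longrightarrow> set (P i) \<inter> set (P j) = {x, y}"
  shows "has_solution V E t \<longleftrightarrow> has_solution V (insert {x, y} E) t"
proof
  assume "has_solution V (insert {x, y} E) t"
  then show "has_solution V E t" by (rule has_solution_edge_subset) blast
next
  assume "has_solution V E t"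
  then obtain S where S: "S \<subseteq> V" "card S \<le> t" and tw: "treewidth_le (V - S) (del_verts_E E S) 2"
    by (auto simp: has_solution_def is_solution_def)
  have "finite V" using assms(1) by (simp add: sgraph_def)
  then have "finite S" using S(1) by (rule finite_subset[rotated])
  have "treewidth_le (V - S) (del_verts_E (insert {x, y} E) S) 2"
  proof (cases "x \<in> S \<or> y \<in> S")
    case True
    then have "del_verts_E (insert {x, y} E) S = del_verts_E E S" by (auto simp: del_verts_E_def)
    then show ?thesis using tw by simp
  next
    case False
    define A where "A = {r\<in>{..<t + 3}. set (P r) \<inter> S = {}}"
    have "t + 3 \<le> card A + card S"
      using card_le_card_avoiding_plus[of "{..<t + 3}" S "{x, y}" "\<lambda>r. set (P r)"]
        \<open>finite S\<close> False assms(7) by (auto simp: A_def)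
    moreover have "\<forall>r\<in>A. is_path (V - S) (del_verts_E E S) x y (P r)"
      using assms(6) by (auto simp: A_def intro: is_path_del_verts_E)
    ultimately have "treewidth_le (V - S) (insert {x, y} (del_verts_E E S)) 2"
      using treewidth_le_insert_edge[OF tw, of A x y P] S(2) \<open>finite V\<close> assms(7) by (auto simp: A_def)
    moreover have "del_verts_E (insert {x, y} E) S = insert {x, y} (del_verts_E E S)"
      using False by (auto simp: del_verts_E_def)
    ultimately show ?thesis by simp
  qed
  then show "has_solution V (insert {x, y} E) t" using S by (auto simp: has_solution_def is_solution_def)
qed

end
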